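(* Let $\mathcal{L}\subset\mathcal{L}_*$ be lineages with hierarchical generators $\mathcal{H},\mathcal{H}_*$. Then (i) for every $\varphi\in\mathcal{H}_*$ there exists $k\ge\mathrm{gap}_{\mathcal{H}_*}(\varphi)$ with $\mathcal{O}(\varphi,-k,\mathcal{H})\neq\emptyset$; (ii) for every $\varphi\in\mathcal{H}_*\cap\mathcal{H}$, $\mathrm{gap}_{\mathcal{H}_*}(\varphi)\le\mathrm{gap}_{\mathcal{H}}(\varphi)$.
   Context: Fix integers $d\ge1$, $n\ge2$, $m\ge2$; $s=n-1$, $p=m-1$. B-splines $\varphi^\ell_{\vec i}(\vec x)=\prod_kQ(n^\ell x_k-i_k)$ for $\ell\ge0$, $\vec i\in\mathbb{Z}^d$, $Q$ the uniform B-spline of order $m$ with knots $0,\dots,m$; $\mathfrak{B}$ the set of all of them; $\mathcal{B}^0=\{\varphi^0_{\vec i}:\vec i\in[-p:0]^d\}$. Children $\mathrm{ch}(\varphi^\ell_{\vec i})=\{\varphi^{\ell+1}_{\vec k}:n\vec i\le\vec k\le n\vec i+sm\}$, extended to sets by union. Cells $I^\ell_{\vec i}=\prod_k[i_kn^{-\ell},(i_k+1)n^{-\ell})$, cell children $\mathrm{ch}(I^\ell_{\vec i})=\{I^{\ell+1}_{\vec k}:n\vec i\le\vec k\le n\vec i+s\}$, $\mathrm{ch}^k$ iterated, $\mathrm{ch}^{-k}(I)=\{J:I\in\mathrm{ch}^k(J)\}$. $\mathbb{I}(\varphi^\ell_{\vec i})=\{I^\ell_{\vec k}:\vec i\le\vec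 k\le\vec i+p\}$, $\mathbb{I}^k(\varphi)=\mathrm{ch}^k(\mathbb{I}(\varphi))$ ($k\in\mathbb{Z}$), $\mathbb{B}^k(I)=\{\varphi\in\mathfrak{B}:I\in\mathbb{I}^{-k}(\varphi)\}$, extended to sets by union; $\mathcal{O}(\varphi,j,\mathcal{H})=\mathbb{B}^j(\mathbb{I}(\varphi))\cap\mathcal{H}$. A lineage is a finite $\mathcal{L}\subset\mathfrak{B}$ with $\mathcal{L}\subset\mathcal{B}^0\cup\mathrm{ch}(\mathcal{L})$; its hierarchical generator is $(\mathcal{B}^0\cup\mathrm{ch}(\mathcal{L}))\setminus\mathcal{L}$. For $\varphi\in\mathcal{H}$, $\mathrm{gap}_{\mathcal{H}}(\varphi)=\sup\{g\in\mathbb{Z}:\mathcal{O}(\varphi,-g,\mathcal{H})\neq\emptyset\}$. *)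

theory Defs
  imports Main
begin

text \<open>A B-spline phi^l_i is represented by its level and index vector (l, i),
  with i an integer list of length d. Distinct pairs give distinct functions
  (the support of phi^l_i is prod_k [i_k n^-l, (i_k+m) n^-l]). Cells I^l_i are
  represented by the same kind of pair. Parameters n, m are the refinement
  factor and spline order; s = n-1, p = m-1.\<close>

type_synonym idx = "nat \<times> int list"

definition vle :: "int list \<Rightarrow> int list \<Rightarrow> bool" where
  "vle a b = list_all2 (\<le>) a b"

definition Bfrak :: "nat \<Rightarrow> idx set" where
  "Bfrak d = {(l, i). length i = d}"

definition B0 :: "nat \<Rightarrow> nat \<Rightarrow> idx set" where
  "B0 d m = {(0, i) | i. length i = d \<and> (\<forall>x \<in> set i. - (int m - 1) \<le> x \<and> x \<le> 0)}"

definition bch :: "nat \<Rightarrow> nat \<Rightarrow> idx \<Rightarrow> idx set" where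
  "bch n m phi = (case phi of (l, i) \<Rightarrow>
     {(Suc l, k) | k. vle (map (\<lambda>x. int n * x) i) k
                    \<and> vle k (map (\<lambda>x. int n * x + (int n - 1) * int m) i)})"

definition Bch :: "nat \<Rightarrow> nat \<Rightarrow> idx set \<Rightarrow> idx set" where
  "Bch n m S = \<Union> (bch n m ` S)"

definition lineage :: "nat \<Rightarrow> nat \<Rightarrow> nat \<Rightarrow> idx set \<Rightarrow> bool" where
  "lineage d n m L \<longleftrightarrow> finite L \<and> L \<subseteq> Bfrak d \<and> L \<subseteq> B0 d m \<union> Bch n m L"

definition hgen :: "nat \<Rightarrow> nat \<Rightarrow> nat \<Rightarrow> idx set \<Rightarrow> idx set" where
  "hgen d n m L = (B0 d m \<union> Bch n m L) - L"

definition supp_cells :: "nat \<Rightarrow> idx \<Rightarrow> idx set" where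
  "supp_cells m phi = (case phi of (l, i) \<Rightarrow>
     {(l, k) | k. vle i k \<and> vle k (map (\<lambda>x. x + (int m - 1)) i)})"

definition cch :: "nat \<Rightarrow> idx \<Rightarrow> idx set" where
  "cch n c = (case c of (l, i) \<Rightarrow>
     {(Suc l, k) | k. vle (map (\<lambda>x. int n * x) i) k
                    \<and> vle k (map (\<lambda>x. int n * x + (int n - 1)) i)})"

fun cch_pow :: "nat \<Rightarrow> nat \<Rightarrow> idx \<Rightarrow> idx set" where
  "cch_pow n 0 c = {c}"
| "cch_pow n (Suc j) c = \<Union> (cch n ` cch_pow n j c)"

definition cell_iter :: "nat \<Rightarrow> int \<Rightarrow> idx set \<Rightarrow> idx set" where
  "cell_iter n k S =
     (if 0 \<le> k then \<Union> (cch_pow n (nat k) ` S)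
      else {J. \<exists>I \<in> S. I \<in> cch_pow n (nat (- k)) J})"

definition Iset :: "nat \<Rightarrow> nat \<Rightarrow> int \<Rightarrow> idx \<Rightarrow> idx set" where
  "Iset n m k phi = cell_iter n k (supp_cells m phi)"

definition BB :: "nat \<Rightarrow> nat \<Rightarrow> nat \<Rightarrow> int \<Rightarrow> idx set \<Rightarrow> idx set" where
  "BB d n m k S = {phi \<in> Bfrak d. \<exists>I \<in> S. I \<in> Iset n m (- k) phi}"

definition Ov :: "nat \<Rightarrow> nat \<Rightarrow> nat \<Rightarrow> idx \<Rightarrow> int \<Rightarrow> idx set \<Rightarrow> idx set" where
  "Ov d n m phi j H = BB d n m j (supp_cells m phi) \<inter> H"

definition gap :: "nat \<Rightarrow> nat \<Rightarrow> nat \<Rightarrow> idx set \<Rightarrow> idx \<Rightarrow> int" where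
  "gap d n m H phi = Sup {g::int. Ov d n m phi (- g) H \<noteq> {}}"

end

theory Submission
  imports Defs
begin

text \<open>Every cell of the support of a B-spline in a hierarchical generator of the
  larger lineage lies, possibly after several refinements, inside the support of
  some B-spline of the generator of the smaller lineage: climbing the parents
  through the larger lineage one eventually leaves the smaller one, and support
  cells of a child always refine support cells of its parent. Hence any overlap
  realising the gap in the larger generator also yields an overlap of at least
  that depth in the smaller one, which gives (i); (ii) follows because the gap is
  the largest such depth.\<close>

lemma vle_iff_nth: "vle a b \<longleftrightarrow> length a = length b \<and> (\<forall>t<length a. a ! t \<le> b ! t)"
  unfolding vle_def by (simp add: list_all2_conv_all_nth)

lemma cch_pow_trans:
  "J \<in> cch_pow n a K \<Longrightarrow> I \<in> cch_pow n b J \<Longrightarrow> I \<in> cch_pow n (a + b) K"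
  by (induction b arbitrary: I) auto

lemma fst_cch_pow: "I \<in> cch_pow n b J \<Longrightarrow> fst I = fst J + b"
  by (induction b arbitrary: I) (auto simp: cch_def split: prod.splits)

lemma Iset_nonneg_iff:
  "0 \<le> k \<Longrightarrow> I \<in> Iset n m k phi \<longleftrightarrow> (\<exists>J \<in> supp_cells m phi. I \<in> cch_pow n (nat k) J)"
  unfolding Iset_def cell_iter_def by auto

lemma Ov_iff:
  "chi \<in> Ov d n m phi k H \<longleftrightarrow>
     chi \<in> Bfrak d \<and> chi \<in> H \<and> (\<exists>I \<in> supp_cells m phi. I \<in> Iset n m (- k) chi)"
  unfolding Ov_def BB_def by auto

lemma int_div_between:
  fixes b i j c :: int
  assumes "0 < b" "b * i \<le> c" "c < b * j"
  shows "i \<le> c div b" "c div b < j"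
proof -
  have "i = (b * i) div b" using assms(1) by simp
  also have "\<dots> \<le> c div b" by (rule zdiv_mono1[OF assms(2,1)])
  finally show "i \<le> c div b" .
  have "b * (c div b) \<le> c"
    using pos_mod_sign[OF assms(1), of c] mult_div_mod_eq[of b c] by linarith
  with assms(3) have "b * (c div b) < b * j" by linarith
  with assms(1) show "c div b < j" by (simp add: mult_less_cancel_left)
qed

text \<open>A cell c of the child's support lies in the cell c div n of the parent level;
  the constraint k \<le> n i + (n - 1) m on the child index is exactly what keeps that
  parent cell inside the parent's support, since c < n i + (n - 1) m + m = n (i + m).\<close>
lemma parent_cell_bounds:
  fixes c i k :: int and n m :: nat
  assumes "n \<ge> 1" "int n * i \<le> k" "k \<le> int n * i + (int n - 1) * int m"
    "k \<le> c" "c \<le> k + (int m - 1)"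
  shows "i \<le> c div int n" "c div int n \<le> i + (int m - 1)"
    "int n * (c div int n) \<le> c" "c \<le> int n * (c div int n) + (int n - 1)"
proof -
  have n: "0 < int n" using assms(1) by simp
  have "c < int n * (i + int m)"
    using assms(3,5) by (simp add: algebra_simps)
  with assms(2,4) show "i \<le> c div int n" "c div int n \<le> i + (int m - 1)"
    using int_div_between[OF n, of i c "i + int m"] by linarith+
  show "int n * (c div int n) \<le> c" "c \<le> int n * (c div int n) + (int n - 1)"
    using n pos_mod_bound[OF n, of c] pos_mod_sign[OF n, of c]
      mult_div_mod_eq[of "int n" c] by linarith+
qed

definition supp_refines :: "nat \<Rightarrow> nat \<Rightarrow> nat \<Rightarrow> idx \<Rightarrow> idx \<Rightarrow> bool" where
  "supp_refines n m j chi psi \<longleftrightarrow>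
     (\<forall>c \<in> supp_cells m psi. \<exists>K \<in> supp_cells m chi. c \<in> cch_pow n j K)"

lemma supp_refines_refl: "supp_refines n m 0 psi psi"
  unfolding supp_refines_def by auto

lemma supp_refines_trans:
  "supp_refines n m a chi phi \<Longrightarrow> supp_refines n m b phi psi \<Longrightarrow> supp_refines n m (a + b) chi psi"
  unfolding supp_refines_def by (meson cch_pow_trans)

lemma bch_supp_refines:
  assumes "n \<ge> 1" "psi \<in> bch n m chi"
  shows "supp_refines n m 1 chi psi"
  unfolding supp_refines_def
proof
  fix c assume "c \<in> supp_cells m psi"
  obtain l i where chi: "chi = (l, i)" by (cases chi)
  obtain k where psi: "psi = (Suc l, k)"
    and v1: "vle (map (\<lambda>x. int n * x) i) k"
    and v2: "vle k (map (\<lambda>x. int n * x + (int n - 1) * int m) i)"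
    using assms(2) unfolding chi bch_def by auto
  obtain cv where c: "c = (Suc l, cv)"
    and w1: "vle k cv" and w2: "vle cv (map (\<lambda>x. x + (int m - 1)) k)"
    using \<open>c \<in> supp_cells m psi\<close> unfolding psi supp_cells_def by auto
  define a where "a = map (\<lambda>x. x div int n) cv"
  have "i ! t \<le> a ! t \<and> a ! t \<le> i ! t + (int m - 1)
      \<and> int n * a ! t \<le> cv ! t \<and> cv ! t \<le> int n * a ! t + (int n - 1)"
    if "t < length i" for t
    using parent_cell_bounds[OF assms(1), where i = "i ! t" and k = "k ! t" and c = "cv ! t"]
      that v1 v2 w1 w2 by (auto simp: vle_iff_nth a_def)
  moreover have "length a = length i" "length cv = length i"
    using v1 w1 by (auto simp: vle_iff_nth a_def)
  ultimately have "(l, a) \<in> supp_cells m chi" "c \<in> cch n (l, a)"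
    unfolding chi c supp_cells_def cch_def by (simp_all add: vle_iff_nth)
  then show "\<exists>K \<in> supp_cells m chi. c \<in> cch_pow n 1 K" by auto
qed

lemma hgen_ancestor:
  assumes n: "n \<ge> 1" and Ls: "Ls \<subseteq> B0 d m \<union> Bch n m Ls"
    and psi: "psi \<in> B0 d m \<union> Bch n m Ls" "psi \<notin> L"
  shows "\<exists>chi \<in> hgen d n m L. \<exists>j. supp_refines n m j chi psi"
  using psi
proof (induction "fst psi" arbitrary: psi)
  case 0
  then have "psi \<in> hgen d n m L"
    unfolding hgen_def Bch_def bch_def by (auto split: prod.splits)
  then show ?case using supp_refines_refl by blast
next
  case (Suc l)
  show ?case
  proof (cases "psi \<in> hgen d n m L")
    case True
    then show ?thesis using supp_refines_refl by blast
  next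
    case False
    then have "psi \<notin> B0 d m" "psi \<notin> Bch n m L"
      using Suc.prems unfolding hgen_def by auto
    with Suc.prems obtain parent where parent: "parent \<in> Ls" "psi \<in> bch n m parent"
      unfolding Bch_def by auto
    have "parent \<notin> L"
      using parent \<open>psi \<notin> Bch n m L\<close> unfolding Bch_def by auto
    moreover have "fst parent = l"
      using parent(2) Suc.hyps(2) unfolding bch_def by (auto split: prod.splits)
    ultimately obtain chi j where "chi \<in> hgen d n m L" "supp_refines n m j chi parent"
      using Suc.hyps(1) parent(1) Ls by blast
    then show ?thesis
      using supp_refines_trans bch_supp_refines[OF n parent(2)] by blast
  qed
qed

lemma hgen_subset_Bfrak:
  assumes "lineage d n m L"
  shows "hgen d n m L \<subseteq> Bfrak d"
proof -
  have "Bch n m S \<subseteq> Bfrak d" if "S \<subseteq> Bfrak d" for S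
    using that unfolding Bch_def bch_def Bfrak_def by (auto simp: vle_iff_nth)
  moreover have "B0 d m \<subseteq> Bfrak d"
    unfolding B0_def Bfrak_def by auto
  ultimately show ?thesis
    using assms unfolding hgen_def lineage_def by blast
qed

lemma self_in_Ov_0:
  assumes "m \<ge> 1" "phi \<in> Bfrak d" "phi \<in> H"
  shows "phi \<in> Ov d n m phi 0 H"
proof -
  have "phi \<in> supp_cells m phi"
    using assms(1) unfolding supp_cells_def by (auto simp: vle_iff_nth split: prod.splits)
  then have "phi \<in> Iset n m 0 phi"
    by (auto simp: Iset_nonneg_iff)
  with \<open>phi \<in> supp_cells m phi\<close> show ?thesis
    using assms(2,3) unfolding Ov_iff by auto
qed

text \<open>Overlap depths are bounded by the level, since ch^g raises the level by g.\<close>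
lemma Ov_nonempty_le_level:
  assumes "Ov d n m phi (- g) H \<noteq> {}"
  shows "g \<le> int (fst phi)"
proof (rule ccontr)
  assume "\<not> g \<le> int (fst phi)"
  moreover from assms obtain chi where "chi \<in> Ov d n m phi (- g) H" by blast
  then obtain I where "I \<in> supp_cells m phi" "I \<in> Iset n m g chi"
    unfolding Ov_iff by auto
  ultimately obtain J where "I \<in> cch_pow n (nat g) J" "fst I = fst phi"
    using Iset_nonneg_iff[of g] unfolding supp_cells_def by (auto split: prod.splits)
  with \<open>\<not> g \<le> int (fst phi)\<close> show False
    using fst_cch_pow by fastforce
qed

lemma bdd_above_gap_set: "bdd_above {g. Ov d n m phi (- g) H \<noteq> {}}"
  unfolding bdd_above_def using Ov_nonempty_le_level by blast

lemma le_gap: "Ov d n m phi (- k) H \<noteq> {} \<Longrightarrow> k \<le> gap d n m H phi"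
  unfolding gap_def by (rule cSup_upper) (auto intro: bdd_above_gap_set)

lemma gap_nonneg_attained:
  assumes "m \<ge> 1" "phi \<in> Bfrak d" "phi \<in> H"
  shows "0 \<le> gap d n m H phi" "Ov d n m phi (- gap d n m H phi) H \<noteq> {}"
proof -
  define X where "X = {g. Ov d n m phi (- g) H \<noteq> {}}"
  have gap: "gap d n m H phi = Sup X" unfolding gap_def X_def ..
  have "Ov d n m phi (- 0) H \<noteq> {}"
    using self_in_Ov_0[OF assms] by auto
  then show "0 \<le> gap d n m H phi" by (rule le_gap)
  have "X \<noteq> {}" using \<open>Ov d n m phi (- 0) H \<noteq> {}\<close> unfolding X_def by blast
  then obtain g where "g \<in> X" "Sup X - 1 < g"
    using less_cSupE[of "Sup X - 1" X] by auto
  moreover have "g \<le> Sup X"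
    using \<open>g \<in> X\<close> le_gap[of d n m phi g H] unfolding X_def gap by simp
  ultimately have "g = Sup X" by linarith
  with \<open>g \<in> X\<close> show "Ov d n m phi (- gap d n m H phi) H \<noteq> {}"
    unfolding gap X_def by simp
qed

lemma nested_lineages_overlap:
  assumes n: "n \<ge> 1" and m: "m \<ge> 1"
    and L: "lineage d n m L" and Ls: "lineage d n m Ls" and "L \<subseteq> Ls"
    and phi: "phi \<in> hgen d n m Ls"
  shows "\<exists>k. k \<ge> gap d n m (hgen d n m Ls) phi \<and> Ov d n m phi (- k) (hgen d n m L) \<noteq> {}"
proof -
  let ?g = "gap d n m (hgen d n m Ls) phi"
  have "phi \<in> Bfrak d" using hgen_subset_Bfrak[OF Ls] phi by auto
  note gap = gap_nonneg_attained[OF m this phi, where n = n]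
  from gap(2) obtain psi where "psi \<in> Ov d n m phi (- ?g) (hgen d n m Ls)" by blast
  then obtain I where psi: "psi \<in> hgen d n m Ls"
    and I: "I \<in> supp_cells m phi" "I \<in> Iset n m ?g psi"
    unfolding Ov_iff by auto
  from I(2) gap(1) obtain J where J: "J \<in> supp_cells m psi" "I \<in> cch_pow n (nat ?g) J"
    using Iset_nonneg_iff by blast
  have "psi \<in> B0 d m \<union> Bch n m Ls" "psi \<notin> L"
    using psi \<open>L \<subseteq> Ls\<close> unfolding hgen_def by auto
  then obtain chi j where chi: "chi \<in> hgen d n m L" "supp_refines n m j chi psi"
    using hgen_ancestor[OF n] Ls unfolding lineage_def by blast
  with J obtain K where "K \<in> supp_cells m chi" "I \<in> cch_pow n (nat ?g + j) K"
    unfolding supp_refines_def using cch_pow_trans add.commute by metis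
  then have "I \<in> Iset n m (?g + int j) chi"
    using Iset_nonneg_iff[of "?g + int j"] gap(1) by (auto simp: nat_add_distrib)
  then have "chi \<in> Ov d n m phi (- (?g + int j)) (hgen d n m L)"
    using chi(1) hgen_subset_Bfrak[OF L] I(1) unfolding Ov_iff by (auto simp: ac_simps)
  then show ?thesis by (intro exI[of _ "?g + int j"]) auto
qed

theorem lemma7p4:
  fixes d n m :: nat and L Ls :: "idx set"
  assumes "d \<ge> 1" and "n \<ge> 2" and "m \<ge> 2"
    and "lineage d n m L" and "lineage d n m Ls" and "L \<subseteq> Ls"
  shows "(\<forall>phi \<in> hgen d n m Ls. \<exists>k. k \<ge> gap d n m (hgen d n m Ls) phi
             \<and> Ov d n m phi (- k) (hgen d n m L) \<noteq> {})
       \<and> (\<forall>phi \<in> hgen d n m Ls \<inter> hgen d n m L.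
             gap d n m (hgen d n m Ls) phi \<le> gap d n m (hgen d n m L) phi)"
proof -
  have overlap: "\<exists>k. k \<ge> gap d n m (hgen d n m Ls) phi \<and> Ov d n m phi (- k) (hgen d n m L) \<noteq> {}"
    if "phi \<in> hgen d n m Ls" for phi
    using nested_lineages_overlap[of n m d L Ls phi] assms that by simp
  show ?thesis
  proof (intro conjI ballI)
    fix phi assume "phi \<in> hgen d n m Ls \<inter> hgen d n m L"
    with overlap show "gap d n m (hgen d n m Ls) phi \<le> gap d n m (hgen d n m L) phi"
      by (meson IntD1 le_gap order_trans)
  qed (fact overlap)
qed

end
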